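(* Let $g:\mathbb{R}^n\times\Xi\to\mathbb{R}^n$ be an arbitrary (stochastic gradient) map and let $\xi^{(1)},\xi^{(2)},\dots\in\Xi$ be a fixed sequence of samples. Fix $\mu\in[0,1)$ and constant learning rates $\gamma_{\mathrm{primal}},\gamma_{\mathrm{modern}}>0$ with $(1-\mu)\gamma_{\mathrm{primal}}=\gamma_{\mathrm{modern}}$. Define the primal averaging sequences by $z_{\mathrm{primal}}^{(1)}=x_{\mathrm{primal}}^{(1)}$ and, for $t\ge 1$, $$y_{\mathrm{primal}}^{(t)}=\mu x_{\mathrm{primal}}^{(t)}+(1-\mu)z_{\mathrm{primal}}^{(t)},\quad z_{\mathrm{primal}}^{(t+1)}=z_{\mathrm{primal}}^{(t)}-\gamma_{\mathrm{primal}}\, g(y_{\mathrm{primal}}^{(t)};\xi^{(t)}),\quad x_{\mathrm{primal}}^{(t+1)}=\mu x_{\mathrm{primal}}^{(t)}+(1-\mu)z_{\mathrm{primal}}^{(t+1)},$$ and the modern Nesterov sequences by $x_{\mathrm{modern}}^{(1)}=x_{\mathrm{primal}}^{(1)}$, $b_{\mathrm{modern}}^{(0)}=0$ and, for $t\ge1$, $$b_{\mathrm{modern}}^{(t)}=\mu b_{\mathrm{modern}}^{(t-1)}+g(x_{\mathrm{modern}}^{(t)};\xi^{(t)}),\qquad x_{\mathrm{modern}}^{(t+1)}=x_{\mathrm{modern}}^{(t)}-\gamma_{\mathrm{modern}}\big[\mu b_{\mathrm{modern}}^{(t)}+g(x_{\mathrm{modern}}^{(t)};\xi^{(t)})\big].$$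 Then for every $t\ge 1$, $$y_{\mathrm{primal}}^{(t)}=x_{\mathrm{modern}}^{(t)}\qquad\text{and}\qquad b_{\mathrm{modern}}^{(t)}=\frac{1}{(1-\mu)\gamma_{\mathrm{primal}}}\big(x_{\mathrm{primal}}^{(t)}-x_{\mathrm{primal}}^{(t+1)}\big).$$
   Context: The first recursion is the "primal averaging formulation" of Nesterov's method and the second is the "modern formulation" (as implemented in PyTorch/JAX). Both are driven by the same sample sequence $\xi^{(t)}$ and started from the same initial point. *)

theory Defs
  imports "HOL-Analysis.Analysis"
begin

end

theory Submission
  imports Defs
begin

(* Both claims follow from the invariant
     xp t - zp t = gp * mu * bm (t - 1)   and   yp t = xm t,
   which one step of each recursion preserves because (1 - mu) * gp = gm. Given the invariant,
   xp t - zp (t + 1) = gp * bm t, and the averaging step of xp scales this difference by 1 - mu. *)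

locale nesterov_primal_modern =
  fixes g :: "'a::real_vector \<Rightarrow> 'xi \<Rightarrow> 'a"
    and xi :: "nat \<Rightarrow> 'xi"
    and mu gp gm :: real
    and xp zp yp xm bm :: "nat \<Rightarrow> 'a"
  assumes lr: "(1 - mu) * gp = gm"
    and zp1: "zp 1 = xp 1"
    and yp: "\<And>t. t \<ge> 1 \<Longrightarrow> yp t = mu *\<^sub>R xp t + (1 - mu) *\<^sub>R zp t"
    and zp: "\<And>t. t \<ge> 1 \<Longrightarrow> zp (t + 1) = zp t - gp *\<^sub>R g (yp t) (xi t)"
    and xp: "\<And>t. t \<ge> 1 \<Longrightarrow> xp (t + 1) = mu *\<^sub>R xp t + (1 - mu) *\<^sub>R zp (t + 1)"
    and xm1: "xm 1 = xp 1"
    and bm0: "bm 0 = 0"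
    and bm: "\<And>t. t \<ge> 1 \<Longrightarrow> bm t = mu *\<^sub>R bm (t - 1) + g (xm t) (xi t)"
    and xm: "\<And>t. t \<ge> 1 \<Longrightarrow> xm (t + 1) = xm t - gm *\<^sub>R (mu *\<^sub>R bm t + g (xm t) (xi t))"
begin

lemma coupling_step:
  assumes t: "t \<ge> 1"
    and y_eq: "yp t = xm t"
    and gap: "xp t - zp t = (gp * mu) *\<^sub>R bm (t - 1)"
  shows "yp (t + 1) = xm (t + 1)"
    and "xp (t + 1) - zp (t + 1) = (gp * mu) *\<^sub>R bm t"
proof -
  define G where "G = g (xm t) (xi t)"
  have x: "xp t = zp t + (gp * mu) *\<^sub>R bm (t - 1)"
    using gap by (simp add: algebra_simps)
  have y: "xm t = mu *\<^sub>R xp t + (1 - mu) *\<^sub>R zp t"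
    using yp[OF t] y_eq by simp
  have b: "bm t = mu *\<^sub>R bm (t - 1) + G"
    using bm[OF t] by (simp add: G_def)
  have z': "zp (t + 1) = zp t - gp *\<^sub>R G"
    using zp[OF t] y_eq by (simp add: G_def)
  have x': "xp (t + 1) = mu *\<^sub>R xp t + (1 - mu) *\<^sub>R zp (t + 1)"
    using xp[OF t] .
  have y': "yp (t + 1) = mu *\<^sub>R xp (t + 1) + (1 - mu) *\<^sub>R zp (t + 1)"
    using yp[of "t + 1"] by simp
  have m': "xm (t + 1) = xm t - ((1 - mu) * gp) *\<^sub>R (mu *\<^sub>R bm t + G)"
    using xm[OF t] lr by (simp add: G_def)
  show "yp (t + 1) = xm (t + 1)"
    unfolding y' m' x' z' y x b by (simp add: algebra_simps)
  show "xp (t + 1) - zp (t + 1) = (gp * mu) *\<^sub>R bm t"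
    unfolding x' z' x b by (simp add: algebra_simps)
qed

lemma coupling:
  assumes "t \<ge> 1"
  shows "yp t = xm t \<and> xp t - zp t = (gp * mu) *\<^sub>R bm (t - 1)"
  using assms
proof (induction t rule: dec_induct)
  case base
  show ?case using yp[of 1] zp1 xm1 bm0 by (simp add: algebra_simps)
next
  case (step t)
  then show ?case using coupling_step by simp
qed

lemma yp_eq_xm: "t \<ge> 1 \<Longrightarrow> yp t = xm t"
  using coupling by blast

lemma xp_minus_next_zp:
  assumes t: "t \<ge> 1"
  shows "xp t - zp (t + 1) = gp *\<^sub>R bm t"
proof -
  have "xp t - zp (t + 1) = (xp t - zp t) + gp *\<^sub>R g (xm t) (xi t)"
    using zp[OF t] yp_eq_xm[OF t] by simp
  also have "\<dots> = gp *\<^sub>R (mu *\<^sub>R bm (t - 1) + g (xm t) (xi t))"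
    using coupling[OF t] by (simp add: algebra_simps)
  finally show ?thesis
    using bm[OF t] by simp
qed

lemma xp_decrement:
  assumes t: "t \<ge> 1"
  shows "xp t - xp (t + 1) = ((1 - mu) * gp) *\<^sub>R bm t"
proof -
  have "xp t - xp (t + 1) = (1 - mu) *\<^sub>R (xp t - zp (t + 1))"
    using xp[OF t] by (simp add: algebra_simps)
  then show ?thesis
    using xp_minus_next_zp[OF t] by simp
qed

end

theorem proposition1:
  fixes g :: "real ^ 'n \<Rightarrow> 'xi \<Rightarrow> real ^ 'n"
    and xi :: "nat \<Rightarrow> 'xi"
    and mu gp gm :: real
    and xp zp yp xm bm :: "nat \<Rightarrow> real ^ 'n"
  assumes mu: "0 \<le> mu" "mu < 1"
    and gp: "gp > 0" and gm: "gm > 0"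
    and lr: "(1 - mu) * gp = gm"
    and zp1: "zp 1 = xp 1"
    and yp: "\<And>t. t \<ge> 1 \<Longrightarrow> yp t = mu *\<^sub>R xp t + (1 - mu) *\<^sub>R zp t"
    and zp: "\<And>t. t \<ge> 1 \<Longrightarrow> zp (t + 1) = zp t - gp *\<^sub>R g (yp t) (xi t)"
    and xp: "\<And>t. t \<ge> 1 \<Longrightarrow> xp (t + 1) = mu *\<^sub>R xp t + (1 - mu) *\<^sub>R zp (t + 1)"
    and xm1: "xm 1 = xp 1"
    and bm0: "bm 0 = 0"
    and bm: "\<And>t. t \<ge> 1 \<Longrightarrow> bm t = mu *\<^sub>R bm (t - 1) + g (xm t) (xi t)"
    and xm: "\<And>t. t \<ge> 1 \<Longrightarrow> xm (t + 1) = xm t - gm *\<^sub>R (mu *\<^sub>R bm t + g (xm t) (xi t))"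
  shows "\<forall>t\<ge>1. yp t = xm t \<and> bm t = (1 / ((1 - mu) * gp)) *\<^sub>R (xp t - xp (t + 1))"
proof -
  interpret nesterov_primal_modern g xi mu gp gm xp zp yp xm bm
    by unfold_locales (fact lr zp1 yp zp xp xm1 bm0 bm xm)+
  have "(1 - mu) * gp \<noteq> 0"
    using mu gp by simp
  then show ?thesis
    using yp_eq_xm xp_decrement by simp
qed

end
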